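(* (a) For any two directed graphs $G_1,G_2$ on the same vertex set $V$ (directed cycles allowed), if $D_{sep}(G_1)\subseteq D_{sep}(G_2)$ then $S(G_2)\subseteq S(G_1)$. (b) There exist two directed graphs $G_1,G_2$ on the same vertex set (with directed cycles) such that $S(G_1)=S(G_2)$, $D_{sep}(G_1)\neq D_{sep}(G_2)$ and $D_{sep}(G_1)\subset D_{sep}(G_2)$. For directed acyclic graphs, no two such graphs exist.
   Context: A directed graph $G=(V,E)$ has vertex set $V=\{1,\dots,p\}$ and directed edges $j\to k$ ($j\ne k$); directed cycles are allowed (a DCG), and a DAG is one without directed cycles. $k$ is a child of $j$ if $j\to k$; $k$ is a descendant of $j$ (and $j$ an ancestor of $k$) if there is a directed path $j\to\cdots\to k$. $j,k$ are really adjacent if $j\to k$ or $k\to j$, and virtually adjacent if they have a common child $\ell$ that is an ancestor of $j$ or of $k$. The skeleton $S(G)$ is the set of unordered pairs that are really or virtually adjacent. On an undirected path $\pi$, an interior vertex $b$ is a collider if both path edges at $b$ point into $b$. For $S\subset V\setminus\{j,k\}$, $j$ is d-connected to $k$ given $S$ if there is an undirected path between $j$ and $k$ on which every interior vertex lying in $S$ is a collider and every collider has itself or a descendant in $S$; otherwise $j$ is d-separated from $k$ given $S$. $D_{sep}(G)$ denotes the set of d-separation rules entailed by $G$, i.e. the set of all triples $(j,k,S)$ with $j\neq k$, $S\subset V\setminus\{j,k\}$ and $j$ d-separated from $k$ given $S$ in $G$. *)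

theory Defs
  imports Main
begin

definition digraph :: "nat \<Rightarrow> (nat \<times> nat) set \<Rightarrow> bool" where
  "digraph p E \<longleftrightarrow> E \<subseteq> {1..p} \<times> {1..p} \<and> (\<forall>j. (j, j) \<notin> E)"

definition really_adj :: "(nat \<times> nat) set \<Rightarrow> nat \<Rightarrow> nat \<Rightarrow> bool" where
  "really_adj E j k \<longleftrightarrow> (j, k) \<in> E \<or> (k, j) \<in> E"

definition virtually_adj :: "(nat \<times> nat) set \<Rightarrow> nat \<Rightarrow> nat \<Rightarrow> bool" where
  "virtually_adj E j k \<longleftrightarrow>
     (\<exists>l. (j, l) \<in> E \<and> (k, l) \<in> E \<and> ((l, j) \<in> E\<^sup>* \<or> (l, k) \<in> E\<^sup>*))"

definition skeleton :: "nat \<Rightarrow> (nat \<times> nat) set \<Rightarrow> nat set set" where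
  "skeleton p E = {{j, k} | j k. j \<in> {1..p} \<and> k \<in> {1..p} \<and> j \<noteq> k \<and>
                     (really_adj E j k \<or> virtually_adj E j k)}"

definition upath :: "(nat \<times> nat) set \<Rightarrow> nat list \<Rightarrow> (nat \<times> nat) list \<Rightarrow> bool" where
  "upath E xs es \<longleftrightarrow> xs \<noteq> [] \<and> distinct xs \<and> length es + 1 = length xs \<and>
     (\<forall>i < length es. es ! i \<in> E \<and>
        (es ! i = (xs ! i, xs ! Suc i) \<or> es ! i = (xs ! Suc i, xs ! i)))"

definition collider :: "nat list \<Rightarrow> (nat \<times> nat) list \<Rightarrow> nat \<Rightarrow> bool" where
  "collider xs es i \<longleftrightarrow> es ! (i - 1) = (xs ! (i - 1), xs ! i) \<and> es ! i = (xs ! Suc i, xs ! i)"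

definition d_connected :: "(nat \<times> nat) set \<Rightarrow> nat \<Rightarrow> nat \<Rightarrow> nat set \<Rightarrow> bool" where
  "d_connected E j k S \<longleftrightarrow>
     (\<exists>xs es. upath E xs es \<and> hd xs = j \<and> last xs = k \<and>
        (\<forall>i. 0 < i \<and> i < length es \<longrightarrow>
            (xs ! i \<in> S \<longrightarrow> collider xs es i) \<and>
            (collider xs es i \<longrightarrow> (\<exists>d \<in> S. (xs ! i, d) \<in> E\<^sup>*))))"

definition Dsep :: "nat \<Rightarrow> (nat \<times> nat) set \<Rightarrow> (nat \<times> nat \<times> nat set) set" where
  "Dsep p E = {(j, k, S). j \<in> {1..p} \<and> k \<in> {1..p} \<and> j \<noteq> k \<and>
                 S \<subseteq> {1..p} - {j, k} \<and> \<not> d_connected E j k S}"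

end

theory Submission
  imports Defs
begin

text \<open>(a) If j and k are not adjacent in G1, the ancestors of j and k d-separate them in G1,
  whereas adjacent vertices of G2 are d-connected given every set avoiding them.
  (b) In a cyclic graph, adding an edge can create a directed path between nonadjacent
  vertices without changing the skeleton, because of virtual adjacencies.
  (c) For DAGs with the same skeleton the inclusion also forces the same v-structures, by
  testing each unshielded triple against the ancestral separating set. By Chickering's
  argument the first DAG is then turned into the second by reversals of covered edges, and
  such a reversal preserves d-connection: an active path is rerouted around the reversed
  edge.\<close>

lemma digraph_edgeD:
  "digraph p E \<Longrightarrow> (a, b) \<in> E \<Longrightarrow> a \<in> {1..p} \<and> b \<in> {1..p} \<and> a \<noteq> b"
  unfolding digraph_def by auto

lemma rtrancl_imp_distinct_path:
  assumes "(a, b) \<in> R\<^sup>*"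
  shows "\<exists>xs. xs \<noteq> [] \<and> hd xs = a \<and> last xs = b \<and> distinct xs \<and>
           successively (\<lambda>u v. (u, v) \<in> R) xs"
  using assms
proof (induction rule: converse_rtrancl_induct)
  case base
  show ?case by (intro exI[of _ "[b]"]) auto
next
  case (step a c)
  then obtain xs where xs: "xs \<noteq> []" "hd xs = c" "last xs = b" "distinct xs"
      "successively (\<lambda>u v. (u, v) \<in> R) xs" by blast
  show ?case
  proof (cases "a \<in> set xs")
    case True
    define ys where "ys = dropWhile (\<lambda>v. v \<noteq> a) xs"
    have split: "xs = takeWhile (\<lambda>v. v \<noteq> a) xs @ ys" by (simp add: ys_def)
    have "ys \<noteq> []" using True by (simp add: ys_def dropWhile_eq_Nil_conv)
    moreover have "hd ys = a" using hd_dropWhile[of "\<lambda>v. v \<noteq> a" xs] \<open>ys \<noteq> []\<close>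
      by (simp add: ys_def)
    moreover have "last ys = b" using xs(3) \<open>ys \<noteq> []\<close> split by (metis last_appendR)
    moreover have "distinct ys" using xs(4) split by (metis distinct_append)
    moreover have "successively (\<lambda>u v. (u, v) \<in> R) ys"
      using xs(5) split by (metis successively_append_iff)
    ultimately show ?thesis by blast
  next
    case False
    then show ?thesis using xs step(1)
      by (intro exI[of _ "a # xs"]) (auto simp: successively_Cons)
  qed
qed

lemma d_connected_directed_path:
  assumes "xs \<noteq> []" "distinct xs" "successively (\<lambda>u v. (u, v) \<in> E \<and> v \<notin> S) xs"
  shows "d_connected E (hd xs) (last xs) S"
proof -
  define es where "es = map (\<lambda>i. (xs ! i, xs ! Suc i)) [0..<length xs - 1]"
  have "upath E xs es"
    unfolding upath_def es_def using assms by (auto simp: successively_conv_nth)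
  moreover have "xs ! i \<notin> S \<and> \<not> collider xs es i" if "0 < i" "i < length es" for i
    using that assms(2) successively_nth[OF assms(3), of "i - 1"]
    unfolding collider_def es_def by (auto simp: nth_eq_iff_index_eq)
  ultimately show ?thesis unfolding d_connected_def by blast
qed

lemma d_connected_converse_path:
  assumes "xs \<noteq> []" "distinct xs" "successively (\<lambda>u v. (v, u) \<in> E \<and> u \<notin> S) xs"
  shows "d_connected E (hd xs) (last xs) S"
proof -
  define es where "es = map (\<lambda>i. (xs ! Suc i, xs ! i)) [0..<length xs - 1]"
  have "upath E xs es"
    unfolding upath_def es_def using assms by (auto simp: successively_conv_nth)
  moreover have "xs ! i \<notin> S \<and> \<not> collider xs es i" if "0 < i" "i < length es" for i
    using that assms(2) successively_nth[OF assms(3), of i]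
    unfolding collider_def es_def by (auto simp: nth_eq_iff_index_eq)
  ultimately show ?thesis unfolding d_connected_def by blast
qed

lemma d_connected_if_unblocked_directed_path:
  assumes "(j, k) \<in> (E \<inter> UNIV \<times> - S)\<^sup>*"
  shows "d_connected E j k S" and "d_connected E k j S"
proof -
  obtain xs where xs: "xs \<noteq> []" "hd xs = j" "last xs = k" "distinct xs"
      "successively (\<lambda>u v. (u, v) \<in> E \<and> v \<notin> S) xs"
    using rtrancl_imp_distinct_path[OF assms] by auto
  show "d_connected E j k S" using d_connected_directed_path[OF xs(1,4,5)] xs(2,3) by simp
  have "d_connected E (hd (rev xs)) (last (rev xs)) S"
    using xs by (intro d_connected_converse_path) (auto simp: successively_rev)
  then show "d_connected E k j S" using xs by (simp add: hd_rev last_rev)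
qed

lemma rtrancl_unblocked_if_no_descendant_in:
  assumes "(l, y) \<in> E\<^sup>*" "\<forall>d\<in>S. (l, d) \<notin> E\<^sup>*"
  shows "(l, y) \<in> (E \<inter> UNIV \<times> - S)\<^sup>*"
  using assms(1)
proof (induction rule: rtrancl_induct)
  case (step y z)
  then have "z \<notin> S" using assms(2) by (meson rtrancl.rtrancl_into_rtrancl)
  with step show ?case by (simp add: rtrancl.rtrancl_into_rtrancl)
qed simp

lemma d_connected_common_child:
  assumes "(j, l) \<in> E" "(k, l) \<in> E" "distinct [j, l, k]" "\<exists>d\<in>S. (l, d) \<in> E\<^sup>*"
  shows "d_connected E j k S"
proof -
  let ?xs = "[j, l, k]" and ?es = "[(j, l), (k, l)]"
  have "upath E ?xs ?es"
    using assms(1-3) unfolding upath_def by (auto simp: less_Suc_eq)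
  moreover have "i = 1" if "0 < i" "i < length ?es" for i
    using that by simp
  ultimately show ?thesis
    using assms(4) unfolding d_connected_def collider_def
    by (intro exI[of _ ?xs] exI[of _ ?es]) (simp add: Ball_def)
qed

lemma adjacent_imp_d_connected:
  assumes "irrefl E" "j \<noteq> k" "j \<notin> S" "k \<notin> S"
    and adj: "really_adj E j k \<or> virtually_adj E j k"
  shows "d_connected E j k S"
proof -
  let ?R = "E \<inter> UNIV \<times> - S"
  consider "(j, k) \<in> E" | "(k, j) \<in> E" | "virtually_adj E j k"
    using adj unfolding really_adj_def by blast
  then show ?thesis
  proof cases
    case 1
    then have "(j, k) \<in> ?R\<^sup>*" using assms(4) by blast
    then show ?thesis by (rule d_connected_if_unblocked_directed_path)
  next
    case 2
    then have "(k, j) \<in> ?R\<^sup>*" using assms(3) by blast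
    then show ?thesis by (rule d_connected_if_unblocked_directed_path)
  next
    case 3
    then obtain l where l: "(j, l) \<in> E" "(k, l) \<in> E" "(l, j) \<in> E\<^sup>* \<or> (l, k) \<in> E\<^sup>*"
      unfolding virtually_adj_def by blast
    have "l \<noteq> j" "l \<noteq> k" using l(1,2) assms(1) unfolding irrefl_def by auto
    show ?thesis
    proof (cases "\<exists>d\<in>S. (l, d) \<in> E\<^sup>*")
      case True
      then show ?thesis
        using d_connected_common_child l(1,2) \<open>l \<noteq> j\<close> \<open>l \<noteq> k\<close> assms(2) by simp
    next
      case False
      then have "l \<notin> S" by blast
      from l(3) show ?thesis
      proof
        assume "(l, j) \<in> E\<^sup>*"
        then have "(l, j) \<in> ?R\<^sup>*"
          using False by (intro rtrancl_unblocked_if_no_descendant_in) auto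
        then have "(k, j) \<in> ?R\<^sup>*"
          using l(2) \<open>l \<notin> S\<close> by (blast intro: converse_rtrancl_into_rtrancl)
        then show ?thesis by (rule d_connected_if_unblocked_directed_path)
      next
        assume "(l, k) \<in> E\<^sup>*"
        then have "(l, k) \<in> ?R\<^sup>*"
          using False by (intro rtrancl_unblocked_if_no_descendant_in) auto
        then have "(j, k) \<in> ?R\<^sup>*"
          using l(1) \<open>l \<notin> S\<close> by (blast intro: converse_rtrancl_into_rtrancl)
        then show ?thesis by (rule d_connected_if_unblocked_directed_path)
      qed
    qed
  qed
qed

lemma upath_edgeD:
  "upath E xs es \<Longrightarrow> i < length es \<Longrightarrow>
     es ! i \<in> E \<and> (es ! i = (xs ! i, xs ! Suc i) \<or> es ! i = (xs ! Suc i, xs ! i))"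
  unfolding upath_def by blast

text \<open>Follow the edges forward from xs ! i until a collider or the end of the path is
  reached.\<close>

lemma upath_forward_edge_in_ancestral:
  assumes path: "upath E xs es"
    and closed: "\<And>u v. (u, v) \<in> E \<Longrightarrow> v \<in> A \<Longrightarrow> u \<in> A"
    and last: "last xs \<in> A"
    and colliders: "\<And>i. 0 < i \<Longrightarrow> i < length es \<Longrightarrow> collider xs es i \<Longrightarrow> xs ! i \<in> A"
    and "i < length es" "es ! i = (xs ! i, xs ! Suc i)"
  shows "xs ! i \<in> A"
  using assms(5,6)
proof (induction "length es - i" arbitrary: i rule: less_induct)
  case less
  have len: "length xs = Suc (length es)" and "xs \<noteq> []"
    using path unfolding upath_def by auto
  have "xs ! Suc i \<in> A"
  proof (cases "Suc i = length es")
    case True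
    then show ?thesis using last len \<open>xs \<noteq> []\<close> by (simp add: last_conv_nth)
  next
    case False
    then have i: "Suc i < length es" using less.prems(1) by simp
    show ?thesis
    proof (cases "collider xs es (Suc i)")
      case True
      then show ?thesis using colliders i by simp
    next
      case False
      then have "es ! Suc i = (xs ! Suc i, xs ! Suc (Suc i))"
        using less.prems(2) upath_edgeD[OF path i] unfolding collider_def by auto
      then show ?thesis using less.hyps i by simp
    qed
  qed
  moreover have "(xs ! i, xs ! Suc i) \<in> E"
    using upath_edgeD[OF path less.prems(1)] less.prems(2) by simp
  ultimately show ?case using closed by blast
qed

text \<open>The second vertex v lies in A, since following the edges forward from it reaches a
  collider or the end; so the path starts with j \<rightarrow> v \<leftarrow> w. Then w lies in A as well,
  and it cannot be an interior vertex, as a collider there would need the edge v \<rightarrow> w.\<close>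

lemma upath_colliders_ancestral_imp_length_two:
  assumes path: "upath E xs es"
    and closed: "\<And>u v. (u, v) \<in> E \<Longrightarrow> v \<in> A \<Longrightarrow> u \<in> A"
    and "hd xs \<in> A" "last xs \<in> A"
    and collider_iff: "\<And>i. 0 < i \<Longrightarrow> i < length es \<Longrightarrow> collider xs es i \<longleftrightarrow> xs ! i \<in> A"
    and "1 < length es"
  shows "length es = 2 \<and> collider xs es 1 \<and> xs ! 1 \<in> A"
proof -
  have "xs \<noteq> []" and dist: "distinct xs" and len: "length xs = Suc (length es)"
    using path unfolding upath_def by auto
  define j v w where "j = xs ! 0" and "v = xs ! 1" and "w = xs ! 2"
  have "0 < length es" using \<open>1 < length es\<close> by linarith
  have "j \<in> A" using \<open>hd xs \<in> A\<close> \<open>xs \<noteq> []\<close> unfolding j_def by (simp add: hd_conv_nth)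
  have e0: "es ! 0 \<in> E \<and> (es ! 0 = (j, v) \<or> es ! 0 = (v, j))"
    using upath_edgeD[OF path \<open>0 < length es\<close>] unfolding j_def v_def by simp
  have e1: "es ! 1 \<in> E \<and> (es ! 1 = (v, w) \<or> es ! 1 = (w, v))"
    using upath_edgeD[OF path, of 1] \<open>1 < length es\<close> unfolding v_def w_def
    by (simp add: numeral_2_eq_2)
  have collider1: "collider xs es 1 \<longleftrightarrow> v \<in> A"
    using collider_iff[of 1] \<open>1 < length es\<close> unfolding v_def by simp
  have "v \<in> A"
  proof (cases "es ! 1 = (v, w)")
    case True
    then show ?thesis
      using upath_forward_edge_in_ancestral[OF path closed \<open>last xs \<in> A\<close>, where i = 1]
        collider_iff \<open>1 < length es\<close>
      unfolding v_def w_def by (simp add: numeral_2_eq_2)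
  next
    case False
    then have "es ! 1 = (w, v)" using e1 by blast
    show ?thesis
    proof (cases "es ! 0 = (j, v)")
      case True
      then have "collider xs es 1"
        using \<open>es ! 1 = (w, v)\<close> unfolding collider_def j_def v_def w_def
        by (simp add: numeral_2_eq_2)
      then show ?thesis using collider1 by simp
    next
      case False
      then have "(v, j) \<in> E" using e0 by auto
      then show ?thesis using closed \<open>j \<in> A\<close> by blast
    qed
  qed
  then have "collider xs es 1" using collider1 by simp
  then have wv: "es ! 1 = (w, v)" "(w, v) \<in> E"
    using e1 unfolding collider_def v_def w_def by (auto simp: numeral_2_eq_2)
  have "\<not> 2 < length es"
  proof
    assume "2 < length es"
    then have "collider xs es 2"
      using collider_iff[of 2] closed[OF wv(2) \<open>v \<in> A\<close>] unfolding w_def by simp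
    then have "es ! 1 = (v, w)" unfolding collider_def v_def w_def by simp
    moreover have "v \<noteq> w"
      using nth_eq_iff_index_eq[OF dist, of 1 2] len \<open>0 < length es\<close> \<open>2 < length es\<close>
      unfolding v_def w_def by simp
    ultimately show False using wv(1) by simp
  qed
  then show ?thesis using \<open>1 < length es\<close> \<open>collider xs es 1\<close> \<open>v \<in> A\<close> unfolding v_def by simp
qed

definition ancestor_sepset :: "nat \<Rightarrow> (nat \<times> nat) set \<Rightarrow> nat \<Rightarrow> nat \<Rightarrow> nat set" where
  "ancestor_sepset p E j k = {a \<in> {1..p}. a \<noteq> j \<and> a \<noteq> k \<and> ((a, j) \<in> E\<^sup>* \<or> (a, k) \<in> E\<^sup>*)}"

lemma nonadjacent_d_separated_by_ancestors:
  assumes dg: "digraph p E" and "j \<noteq> k" and "\<not> really_adj E j k" and "\<not> virtually_adj E j k"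
  shows "\<not> d_connected E j k (ancestor_sepset p E j k)"
proof
  let ?S = "ancestor_sepset p E j k"
  define A where "A = {v. (v, j) \<in> E\<^sup>* \<or> (v, k) \<in> E\<^sup>*}"
  assume "d_connected E j k ?S"
  then obtain xs es where path: "upath E xs es" and ends: "hd xs = j" "last xs = k"
    and C: "\<And>i. 0 < i \<Longrightarrow> i < length es \<Longrightarrow>
          (xs ! i \<in> ?S \<longrightarrow> collider xs es i) \<and>
          (collider xs es i \<longrightarrow> (\<exists>d\<in>?S. (xs ! i, d) \<in> E\<^sup>*))"
    unfolding d_connected_def by blast
  have len: "length xs = Suc (length es)" and "xs \<noteq> []" and dist: "distinct xs"
    using path unfolding upath_def by auto
  have x0: "xs ! 0 = j" and xn: "xs ! length es = k"
    using ends \<open>xs \<noteq> []\<close> len by (auto simp: hd_conv_nth last_conv_nth)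
  have closed: "u \<in> A" if "(u, v) \<in> E" "v \<in> A" for u v
    using that unfolding A_def by (auto intro: converse_rtrancl_into_rtrancl)
  have collider_iff: "collider xs es i \<longleftrightarrow> xs ! i \<in> A" if i: "0 < i" "i < length es" for i
  proof
    assume "collider xs es i"
    then obtain d where "d \<in> ?S" "(xs ! i, d) \<in> E\<^sup>*" using C i by blast
    then show "xs ! i \<in> A"
      unfolding A_def ancestor_sepset_def by (auto intro: rtrancl_trans)
  next
    assume "xs ! i \<in> A"
    moreover have "xs ! i \<noteq> j" "xs ! i \<noteq> k"
      using i dist len by (simp_all add: x0[symmetric] xn[symmetric] nth_eq_iff_index_eq)
    moreover have "xs ! i \<in> {1..p}"
      using upath_edgeD[OF path, of i] i dg by (auto dest: digraph_edgeD)
    ultimately have "xs ! i \<in> ?S" unfolding A_def ancestor_sepset_def by blast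
    then show "collider xs es i" using C i by blast
  qed
  have "0 < length es" using x0 xn \<open>j \<noteq> k\<close> by (cases es) auto
  moreover have "length es \<noteq> 1"
    using upath_edgeD[OF path \<open>0 < length es\<close>] x0 xn assms(3) unfolding really_adj_def by auto
  ultimately have "1 < length es" by linarith
  moreover have "hd xs \<in> A" "last xs \<in> A" using ends unfolding A_def by simp_all
  ultimately have "length es = 2 \<and> collider xs es 1 \<and> xs ! 1 \<in> A"
    by (intro upath_colliders_ancestral_imp_length_two[OF path]) (use closed collider_iff in auto)
  then have "length es = 2" "collider xs es 1" "xs ! 1 \<in> A" by blast+
  then have "(j, xs ! 1) \<in> E" "(k, xs ! 1) \<in> E"
    using upath_edgeD[OF path, of 0] upath_edgeD[OF path, of 1] x0 xn
    unfolding collider_def by (auto simp: numeral_2_eq_2)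
  then show False using \<open>xs ! 1 \<in> A\<close> assms(4) unfolding virtually_adj_def A_def by blast
qed

lemma digraph_irrefl: "digraph p E \<Longrightarrow> irrefl E"
  unfolding digraph_def irrefl_def by blast

theorem skeleton_subset_if_Dsep_subset:
  assumes dg1: "digraph p E1" and dg2: "digraph p E2" and Dsep: "Dsep p E1 \<subseteq> Dsep p E2"
  shows "skeleton p E2 \<subseteq> skeleton p E1"
proof
  fix s assume "s \<in> skeleton p E2"
  then obtain j k where jk: "s = {j, k}" "j \<in> {1..p}" "k \<in> {1..p}" "j \<noteq> k"
    and adj2: "really_adj E2 j k \<or> virtually_adj E2 j k"
    unfolding skeleton_def by blast
  show "s \<in> skeleton p E1"
  proof (cases "really_adj E1 j k \<or> virtually_adj E1 j k")
    case True
    then show ?thesis using jk unfolding skeleton_def by blast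
  next
    case False
    let ?S = "ancestor_sepset p E1 j k"
    have S: "?S \<subseteq> {1..p} - {j, k}" unfolding ancestor_sepset_def by auto
    have "\<not> d_connected E1 j k ?S"
      using nonadjacent_d_separated_by_ancestors[OF dg1 \<open>j \<noteq> k\<close>] False by blast
    then have "(j, k, ?S) \<in> Dsep p E1" using S jk(2-4) unfolding Dsep_def by blast
    then have "\<not> d_connected E2 j k ?S" using Dsep unfolding Dsep_def by blast
    moreover have "d_connected E2 j k ?S"
      using S by (intro adjacent_imp_d_connected[OF digraph_irrefl[OF dg2] \<open>j \<noteq> k\<close> _ _ adj2]) auto
    ultimately show ?thesis by blast
  qed
qed

lemma d_connected_mono:
  assumes "E \<subseteq> F" "d_connected E j k S"
  shows "d_connected F j k S"
proof -
  obtain xs es where path: "upath E xs es" and ends: "hd xs = j" "last xs = k"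
    and C: "\<forall>i. 0 < i \<and> i < length es \<longrightarrow> (xs ! i \<in> S \<longrightarrow> collider xs es i) \<and>
          (collider xs es i \<longrightarrow> (\<exists>d\<in>S. (xs ! i, d) \<in> E\<^sup>*))"
    using assms(2) unfolding d_connected_def by blast
  have "upath F xs es" using path assms(1) unfolding upath_def by blast
  moreover have "\<forall>i. 0 < i \<and> i < length es \<longrightarrow> (xs ! i \<in> S \<longrightarrow> collider xs es i) \<and>
      (collider xs es i \<longrightarrow> (\<exists>d\<in>S. (xs ! i, d) \<in> F\<^sup>*))"
    using C rtrancl_mono[OF assms(1)] by blast
  ultimately show ?thesis unfolding d_connected_def using ends by blast
qed

lemma Dsep_antimono: "E \<subseteq> F \<Longrightarrow> Dsep p F \<subseteq> Dsep p E"
  unfolding Dsep_def by (auto dest: d_connected_mono)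

lemma skeleton_mono:
  assumes "E \<subseteq> F" shows "skeleton p E \<subseteq> skeleton p F"
proof -
  have "really_adj E j k \<Longrightarrow> really_adj F j k" for j k
    using assms unfolding really_adj_def by blast
  moreover have "virtually_adj E j k \<Longrightarrow> virtually_adj F j k" for j k
    using assms rtrancl_mono[OF assms] unfolding virtually_adj_def by blast
  ultimately show ?thesis unfolding skeleton_def by blast
qed

text \<open>The vertices 3 and 4 have no parents in ex_graph, so the empty set d-separates them;
  adding the edge 2 \<rightarrow> 3 creates the directed path 4 \<rightarrow> 1 \<rightarrow> 2 \<rightarrow> 3.
  The skeleton does not change, because 1 and 3 are already virtually adjacent
  through their common child 2, an ancestor of 1.\<close>

definition ex_graph :: "(nat \<times> nat) set" where
  "ex_graph = {(1, 2), (2, 1), (3, 2), (4, 1)}"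

lemma digraph_ex_graph: "digraph 4 ex_graph" "digraph 4 (insert (2, 3) ex_graph)"
  unfolding digraph_def ex_graph_def by auto

lemma not_acyclic_ex_graph: "\<not> acyclic (insert (2, 3) ex_graph)"
proof -
  have "(1, 2) \<in> ex_graph\<^sup>+" "(2, 1) \<in> ex_graph" unfolding ex_graph_def by auto
  then have "(1, 1) \<in> ex_graph\<^sup>+" by (rule trancl_into_trancl)
  then have "(1, 1) \<in> (insert (2, 3) ex_graph)\<^sup>+" using trancl_mono subset_insertI by blast
  then show ?thesis unfolding acyclic_def by blast
qed

lemma not_adjacent_3_4_ex_graph:
  "\<not> really_adj (insert (2, 3) ex_graph) 3 4" "\<not> really_adj (insert (2, 3) ex_graph) 4 3"
  "\<not> virtually_adj (insert (2, 3) ex_graph) 3 4" "\<not> virtually_adj (insert (2, 3) ex_graph) 4 3"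
  unfolding really_adj_def virtually_adj_def ex_graph_def by auto

lemma skeleton_ex_graph: "skeleton 4 (insert (2, 3) ex_graph) = skeleton 4 ex_graph"
proof
  show "skeleton 4 ex_graph \<subseteq> skeleton 4 (insert (2, 3) ex_graph)"
    by (rule skeleton_mono) blast
next
  have "(2, 1) \<in> ex_graph\<^sup>*" "(1, 2) \<in> ex_graph\<^sup>*" unfolding ex_graph_def by auto
  then have virt: "virtually_adj ex_graph 1 3" "virtually_adj ex_graph 3 1"
      "virtually_adj ex_graph 2 4" "virtually_adj ex_graph 4 2"
    unfolding virtually_adj_def ex_graph_def by blast+
  have adj: "really_adj ex_graph j k \<or> virtually_adj ex_graph j k"
    if "j \<in> {1..4}" "k \<in> {1..4}" "j \<noteq> k" "\<not> (j = 3 \<and> k = 4)" "\<not> (j = 4 \<and> k = 3)"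
    for j k :: nat
  proof -
    have "j \<in> {1, 2, 3, 4}" "k \<in> {1, 2, 3, 4}" using that(1,2) by auto
    then show ?thesis using that(3-5) virt unfolding really_adj_def ex_graph_def by auto
  qed
  show "skeleton 4 (insert (2, 3) ex_graph) \<subseteq> skeleton 4 ex_graph"
    unfolding skeleton_def using adj not_adjacent_3_4_ex_graph by blast
qed

lemma d_connected_ex_graph: "d_connected (insert (2, 3) ex_graph) 4 3 {}"
proof -
  let ?R = "insert (2, 3) ex_graph \<inter> UNIV \<times> - {}"
  have "(4, 1) \<in> ?R" "(1, 2) \<in> ?R" "(2, 3) \<in> ?R" unfolding ex_graph_def by auto
  then have "(4, 3) \<in> ?R\<^sup>+" by (meson r_into_trancl trancl_into_trancl)
  then show ?thesis by (intro d_connected_if_unblocked_directed_path trancl_into_rtrancl)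
qed

lemma d_separated_ex_graph: "\<not> d_connected ex_graph 4 3 {}"
proof -
  have "(a, v) \<in> ex_graph\<^sup>* \<Longrightarrow> v \<in> {3, 4} \<Longrightarrow> a = v" for a v
    by (erule rtranclE) (auto simp: ex_graph_def)
  then have "ancestor_sepset 4 ex_graph 4 3 = {}" unfolding ancestor_sepset_def by auto
  moreover have "\<not> really_adj ex_graph 4 3" "\<not> virtually_adj ex_graph 4 3"
    unfolding really_adj_def virtually_adj_def ex_graph_def by auto
  ultimately show ?thesis
    using nonadjacent_d_separated_by_ancestors[OF digraph_ex_graph(1), of 4 3] by simp
qed

theorem Dsep_psubset_with_equal_skeleton:
  "digraph 4 (insert (2, 3) ex_graph) \<and> digraph 4 ex_graph \<and>
   \<not> acyclic (insert (2, 3) ex_graph) \<and>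
   skeleton 4 (insert (2, 3) ex_graph) = skeleton 4 ex_graph \<and>
   Dsep 4 (insert (2, 3) ex_graph) \<subset> Dsep 4 ex_graph"
proof -
  have "(4, 3, {}) \<in> Dsep 4 ex_graph - Dsep 4 (insert (2, 3) ex_graph)"
    unfolding Dsep_def using d_separated_ex_graph d_connected_ex_graph by simp
  moreover have "Dsep 4 (insert (2, 3) ex_graph) \<subseteq> Dsep 4 ex_graph"
    by (rule Dsep_antimono) blast
  ultimately show ?thesis
    using digraph_ex_graph not_acyclic_ex_graph skeleton_ex_graph by blast
qed

lemma ex_nat_Suc_split: "(\<exists>i::nat. P i) \<longleftrightarrow> P 0 \<or> (\<exists>i. P (Suc i))"
  by (metis not0_implies_Suc)

fun triples :: "'a list \<Rightarrow> ('a \<times> 'a \<times> 'a) list" where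
  "triples (a # b # c # xs) = (a, b, c) # triples (b # c # xs)"
| "triples _ = []"

lemma mem_triples_iff_nth:
  "(a, b, c) \<in> set (triples xs) \<longleftrightarrow>
   (\<exists>i. Suc (Suc i) < length xs \<and> xs ! i = a \<and> xs ! Suc i = b \<and> xs ! Suc (Suc i) = c)"
proof (induction xs rule: triples.induct)
  case (1 a' b' c' xs)
  show ?case by (subst ex_nat_Suc_split) (use 1 in auto)
qed auto

lemma set_triples_append_Cons_Cons:
  "set (triples (p @ u # v # q)) = set (triples (p @ [u])) \<union> set (triples (v # q)) \<union>
     (if p = [] then {} else {(last p, u, v)}) \<union> (if q = [] then {} else {(u, v, hd q)})"
  by (induction p rule: triples.induct) (auto simp: neq_Nil_conv)

lemma set_triples_append_left: "set (triples p) \<subseteq> set (triples (p @ q))"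
  by (induction p rule: triples.induct) auto

lemma set_triples_append_right: "set (triples q) \<subseteq> set (triples (p @ q))"
proof (induction p)
  case (Cons a p)
  have "set (triples (p @ q)) \<subseteq> set (triples (a # p @ q))"
    by (cases "p @ q" rule: triples.cases) auto
  then show ?case using Cons by auto
qed simp

lemma mem_triples_iff_split:
  "(a, b, c) \<in> set (triples zs) \<longleftrightarrow> (\<exists>p q. zs = p @ a # b # c # q)"
proof
  show "(a, b, c) \<in> set (triples zs) \<Longrightarrow> \<exists>p q. zs = p @ a # b # c # q"
  proof (induction zs rule: triples.induct)
    case (1 a' b' c' xs)
    show ?case
    proof (cases "(a, b, c) = (a', b', c')")
      case True
      then show ?thesis by (intro exI[of _ "[]"] exI[of _ xs]) auto
    next
      case False
      then obtain p q where "b' # c' # xs = p @ a # b # c # q" using 1 by auto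
      then show ?thesis by (intro exI[of _ "a' # p"] exI[of _ q]) simp
    qed
  qed auto
  show "\<exists>p q. zs = p @ a # b # c # q \<Longrightarrow> (a, b, c) \<in> set (triples zs)"
    using set_triples_append_right by fastforce
qed

lemma mem_triples_rev: "(a, b, c) \<in> set (triples (rev zs)) \<longleftrightarrow> (c, b, a) \<in> set (triples zs)"
  unfolding mem_triples_iff_split
  by (metis append.assoc append_Cons append_Nil rev.simps rev_append rev_rev_ident)

lemma mem_triples_middle_unique:
  assumes "distinct zs" "(a, b, c) \<in> set (triples zs)" "(a', b, c') \<in> set (triples zs)"
  shows "a = a' \<and> c = c'"
proof -
  obtain i where i: "Suc (Suc i) < length zs" "zs ! i = a" "zs ! Suc i = b" "zs ! Suc (Suc i) = c"
    using assms(2) mem_triples_iff_nth by metis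
  obtain i' where i': "Suc (Suc i') < length zs" "zs ! i' = a'" "zs ! Suc i' = b"
      "zs ! Suc (Suc i') = c'"
    using assms(3) mem_triples_iff_nth by metis
  have "i = i'" using i i' assms(1) nth_eq_iff_index_eq by (metis Suc_lessD Suc_inject)
  then show ?thesis using i i' by simp
qed

lemma mem_triples_successively:
  "successively R zs \<Longrightarrow> (a, b, c) \<in> set (triples zs) \<Longrightarrow> R a b \<and> R b c"
  by (induction zs rule: triples.induct) auto

lemma mem_triples_in_set:
  "(a, b, c) \<in> set (triples zs) \<Longrightarrow> a \<in> set zs \<and> b \<in> set zs \<and> c \<in> set zs"
  by (auto simp: mem_triples_iff_split)

lemma acyclic_edge_not_back: "acyclic E \<Longrightarrow> (a, b) \<in> E \<Longrightarrow> (b, a) \<notin> E\<^sup>*"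
  unfolding acyclic_def by (meson rtrancl_into_trancl2)

lemma acyclic_edge_asym: "acyclic E \<Longrightarrow> (a, b) \<in> E \<Longrightarrow> (b, a) \<notin> E"
  by (meson acyclic_edge_not_back r_into_rtrancl)

lemma acyclic_edge_irrefl: "acyclic E \<Longrightarrow> (a, a) \<notin> E"
  using acyclic_edge_not_back[of E a a] by blast

lemma acyclic_no_triangle: "acyclic E \<Longrightarrow> (a, b) \<in> E \<Longrightarrow> (b, c) \<in> E \<Longrightarrow> (c, a) \<notin> E"
  by (meson acyclic_edge_not_back converse_rtrancl_into_rtrancl r_into_rtrancl)

definition head_to_head :: "(nat \<times> nat) set \<Rightarrow> nat \<Rightarrow> nat \<Rightarrow> nat \<Rightarrow> bool" where
  "head_to_head E a b c \<longleftrightarrow> (a, b) \<in> E \<and> (c, b) \<in> E"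

definition ancestors :: "(nat \<times> nat) set \<Rightarrow> nat set \<Rightarrow> nat set" where
  "ancestors E S = {v. \<exists>d\<in>S. (v, d) \<in> E\<^sup>*}"

definition active_triple :: "(nat \<times> nat) set \<Rightarrow> nat set \<Rightarrow> nat \<Rightarrow> nat \<Rightarrow> nat \<Rightarrow> bool" where
  "active_triple E S a b c \<longleftrightarrow>
     (b \<in> S \<longrightarrow> head_to_head E a b c) \<and> (head_to_head E a b c \<longrightarrow> b \<in> ancestors E S)"

text \<open>In a DAG the orientation of each edge of a path is determined by the graph, so a
  d-connecting path is just a list of vertices.\<close>

definition active_path :: "(nat \<times> nat) set \<Rightarrow> nat set \<Rightarrow> nat list \<Rightarrow> bool" where
  "active_path E S xs \<longleftrightarrow> xs \<noteq> [] \<and> distinct xs \<and> successively (really_adj E) xs \<and>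
     (\<forall>a b c. (a, b, c) \<in> set (triples xs) \<longrightarrow> active_triple E S a b c)"

lemma upath_edge_orientation:
  assumes "acyclic E" "upath E xs es" "i < length es"
  shows "es ! i = (xs ! i, xs ! Suc i) \<longleftrightarrow> (xs ! i, xs ! Suc i) \<in> E"
    and "es ! i = (xs ! Suc i, xs ! i) \<longleftrightarrow> (xs ! Suc i, xs ! i) \<in> E"
proof -
  have edge: "es ! i \<in> E" "es ! i = (xs ! i, xs ! Suc i) \<or> es ! i = (xs ! Suc i, xs ! i)"
    using upath_edgeD[OF assms(2,3)] by blast+
  note asym = acyclic_edge_asym[OF assms(1), of "xs ! i" "xs ! Suc i"]
    acyclic_edge_asym[OF assms(1), of "xs ! Suc i" "xs ! i"]
  show "es ! i = (xs ! i, xs ! Suc i) \<longleftrightarrow> (xs ! i, xs ! Suc i) \<in> E"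
    using edge asym by metis
  show "es ! i = (xs ! Suc i, xs ! i) \<longleftrightarrow> (xs ! Suc i, xs ! i) \<in> E"
    using edge asym by metis
qed

lemma collider_iff_head_to_head:
  assumes "acyclic E" "upath E xs es" "0 < m" "m < length es"
  shows "collider xs es m \<longleftrightarrow> head_to_head E (xs ! (m - 1)) (xs ! m) (xs ! Suc m)"
proof -
  have "m - 1 < length es" "Suc (m - 1) = m" using assms(3,4) by auto
  then have "es ! (m - 1) = (xs ! (m - 1), xs ! m) \<longleftrightarrow> (xs ! (m - 1), xs ! m) \<in> E"
    using upath_edge_orientation(1)[OF assms(1,2)] by metis
  moreover have "es ! m = (xs ! Suc m, xs ! m) \<longleftrightarrow> (xs ! Suc m, xs ! m) \<in> E"
    using upath_edge_orientation(2)[OF assms(1,2,4)] .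
  ultimately show ?thesis unfolding collider_def head_to_head_def by simp
qed

lemma d_connected_imp_active_path:
  assumes "acyclic E" "d_connected E j k S"
  shows "\<exists>xs. active_path E S xs \<and> hd xs = j \<and> last xs = k"
proof -
  obtain xs es where path: "upath E xs es" and ends: "hd xs = j" "last xs = k"
    and C: "\<And>i. 0 < i \<Longrightarrow> i < length es \<Longrightarrow>
          (xs ! i \<in> S \<longrightarrow> collider xs es i) \<and> (collider xs es i \<longrightarrow> (\<exists>d\<in>S. (xs ! i, d) \<in> E\<^sup>*))"
    using assms(2) unfolding d_connected_def by blast
  have len: "length xs = Suc (length es)" using path unfolding upath_def by simp
  have "really_adj E (xs ! i) (xs ! Suc i)" if "Suc i < length xs" for i
    using upath_edgeD[OF path, of i] that len unfolding really_adj_def by auto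
  then have "successively (really_adj E) xs" by (simp add: successively_conv_nth)
  moreover have "active_triple E S a b c" if abc: "(a, b, c) \<in> set (triples xs)" for a b c
  proof -
    obtain i where i: "Suc (Suc i) < length xs" "xs ! i = a" "xs ! Suc i = b" "xs ! Suc (Suc i) = c"
      using abc unfolding mem_triples_iff_nth by blast
    then have "0 < Suc i" "Suc i < length es" using len by auto
    then have "collider xs es (Suc i) \<longleftrightarrow> head_to_head E a b c"
      using collider_iff_head_to_head[OF assms(1) path] i by simp
    then show ?thesis
      using C[OF \<open>0 < Suc i\<close> \<open>Suc i < length es\<close>] i(3)
      unfolding active_triple_def ancestors_def by simp
  qed
  ultimately have "active_path E S xs" using path unfolding active_path_def upath_def by blast
  then show ?thesis using ends by blast
qed

lemma active_path_imp_d_connected: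
  assumes "acyclic E" "active_path E S xs"
  shows "d_connected E (hd xs) (last xs) S"
proof -
  define es where "es = map (\<lambda>i. if (xs ! i, xs ! Suc i) \<in> E then (xs ! i, xs ! Suc i)
      else (xs ! Suc i, xs ! i)) [0..<length xs - 1]"
  have "xs \<noteq> []" and "distinct xs" and adj: "successively (really_adj E) xs"
    and T: "\<And>a b c. (a, b, c) \<in> set (triples xs) \<Longrightarrow> active_triple E S a b c"
    using assms(2) unfolding active_path_def by blast+
  have len: "length es + 1 = length xs" using \<open>xs \<noteq> []\<close> unfolding es_def by simp
  have "es ! i \<in> E \<and> (es ! i = (xs ! i, xs ! Suc i) \<or> es ! i = (xs ! Suc i, xs ! i))"
    if "i < length es" for i
  proof -
    have "really_adj E (xs ! i) (xs ! Suc i)" using successively_nth[OF adj, of i] that len by simp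
    then show ?thesis using that len unfolding es_def really_adj_def by auto
  qed
  then have path: "upath E xs es"
    unfolding upath_def using \<open>xs \<noteq> []\<close> \<open>distinct xs\<close> len by blast
  have "(xs ! m \<in> S \<longrightarrow> collider xs es m) \<and> (collider xs es m \<longrightarrow> (\<exists>d\<in>S. (xs ! m, d) \<in> E\<^sup>*))"
    if m: "0 < m" "m < length es" for m
  proof -
    have "(xs ! (m - 1), xs ! m, xs ! Suc m) \<in> set (triples xs)"
      unfolding mem_triples_iff_nth using m len by (intro exI[of _ "m - 1"]) auto
    then show ?thesis
      using T collider_iff_head_to_head[OF assms(1) path m]
      unfolding active_triple_def ancestors_def by simp
  qed
  then show ?thesis unfolding d_connected_def using path by blast
qed

lemma d_connected_iff_active_path:
  "acyclic E \<Longrightarrow> d_connected E j k S \<longleftrightarrow> (\<exists>xs. active_path E S xs \<and> hd xs = j \<and> last xs = k)"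
  using d_connected_imp_active_path active_path_imp_d_connected by blast

lemma active_path_rev: "active_path E S (rev xs) \<longleftrightarrow> active_path E S xs"
proof -
  have "active_triple E S a b c \<longleftrightarrow> active_triple E S c b a" for a b c
    unfolding active_triple_def head_to_head_def by auto
  then have "(\<forall>a b c. (a, b, c) \<in> set (triples (rev xs)) \<longrightarrow> active_triple E S a b c) \<longleftrightarrow>
      (\<forall>a b c. (a, b, c) \<in> set (triples xs) \<longrightarrow> active_triple E S a b c)"
    unfolding mem_triples_rev by metis
  moreover have "successively (really_adj E) (rev xs) \<longleftrightarrow> successively (really_adj E) xs"
    unfolding successively_rev really_adj_def by (simp add: disj_commute)
  ultimately show ?thesis unfolding active_path_def by simp
qed

lemma really_adj_sym: "really_adj E a b \<longleftrightarrow> really_adj E b a"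
  unfolding really_adj_def by auto

lemma successively_append_Cons_iff:
  "successively R (p @ u # r) \<longleftrightarrow> successively R (p @ [u]) \<and> successively R (u # r)"
  by (auto simp: successively_append_iff)

lemma not_successively_split:
  "\<not> successively R xs \<Longrightarrow> \<exists>p u v q. xs = p @ u # v # q \<and> \<not> R u v"
proof (induction xs)
  case (Cons a xs)
  show ?case
  proof (cases xs)
    case (Cons b xs')
    show ?thesis
    proof (cases "R a b")
      case True
      then have "\<not> successively R xs" using Cons.prems \<open>xs = b # xs'\<close> by simp
      then obtain p u v q where "xs = p @ u # v # q" "\<not> R u v" using Cons.IH by blast
      then show ?thesis by (intro exI[of _ "a # p"] exI[of _ u] exI[of _ v] exI[of _ q]) simp
    next
      case False
      then show ?thesis using \<open>xs = b # xs'\<close>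
        by (intro exI[of _ "[]"] exI[of _ a] exI[of _ b] exI[of _ xs']) simp
    qed
  qed (use Cons.prems in simp)
qed simp

lemma active_pathD:
  assumes "active_path E S xs"
  shows "xs \<noteq> []" "distinct xs" "successively (really_adj E) xs"
    "\<And>a b c. (a, b, c) \<in> set (triples xs) \<Longrightarrow> active_triple E S a b c"
  using assms unfolding active_path_def by blast+

lemma active_triple_if_not_head_to_head:
  "b \<notin> S \<Longrightarrow> \<not> head_to_head E a b c \<Longrightarrow> active_triple E S a b c"
  unfolding active_triple_def by blast

lemma active_triple_tail_not_in:
  "acyclic E \<Longrightarrow> active_triple E S a v w \<Longrightarrow> (v, w) \<in> E \<Longrightarrow> v \<notin> S"
  unfolding active_triple_def head_to_head_def using acyclic_edge_asym[of E v w] by blast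

lemma active_triple_tail_not_in':
  "acyclic E \<Longrightarrow> active_triple E S w v a \<Longrightarrow> (v, w) \<in> E \<Longrightarrow> v \<notin> S"
  unfolding active_triple_def head_to_head_def using acyclic_edge_asym[of E v w] by blast

definition v_structure :: "(nat \<times> nat) set \<Rightarrow> nat \<Rightarrow> nat \<Rightarrow> nat \<Rightarrow> bool" where
  "v_structure E a b c \<longleftrightarrow> (a, b) \<in> E \<and> (c, b) \<in> E \<and> a \<noteq> c \<and> \<not> really_adj E a c"

text \<open>Chickering's covered edges: x \<rightarrow> y is covered when the parents of y are x and the
  parents of x. Reversing it preserves acyclicity, adjacencies, v-structures and
  d-connection.\<close>

locale covered_edge =
  fixes E :: "(nat \<times> nat) set" and x y :: nat
  assumes acyclic_E: "acyclic E" and edge_xy: "(x, y) \<in> E"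
    and parents_y: "\<And>z. (z, y) \<in> E \<longleftrightarrow> z = x \<or> (z, x) \<in> E"
begin

abbreviation Erev :: "(nat \<times> nat) set" where
  "Erev \<equiv> insert (y, x) (E - {(x, y)})"

lemma asym_E: "(a, b) \<in> E \<Longrightarrow> (b, a) \<notin> E"
  using acyclic_edge_asym[OF acyclic_E] .

lemma irrefl_E: "(a, a) \<notin> E"
  using acyclic_edge_irrefl[OF acyclic_E] .

lemma x_neq_y: "x \<noteq> y"
  using edge_xy irrefl_E by blast

lemma really_adj_reversed: "really_adj Erev = really_adj E"
  unfolding really_adj_def using edge_xy by (intro ext) auto

lemma acyclic_reversed: "acyclic Erev"
proof -
  let ?F = "E - {(x, y)}"
  have "acyclic ?F" using acyclic_E by (rule acyclic_subset) blast
  moreover have "(x, y) \<notin> ?F\<^sup>*"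
  proof
    assume "(x, y) \<in> ?F\<^sup>*"
    then show False
    proof (cases rule: rtranclE)
      case base
      then show False using x_neq_y by simp
    next
      case (step w)
      then have "(w, x) \<in> E" using parents_y by blast
      moreover have "(x, w) \<in> E\<^sup>*" using step(1) rtrancl_mono[of ?F E] by blast
      ultimately show False using acyclic_edge_not_back[OF acyclic_E] by blast
    qed
  qed
  ultimately show ?thesis by simp
qed

lemma v_structure_reversed: "v_structure Erev u v w \<longleftrightarrow> v_structure E u v w"
proof
  assume "v_structure Erev u v w"
  then have e: "(u, v) \<in> Erev" "(w, v) \<in> Erev" "u \<noteq> w" "\<not> really_adj E u w"
    unfolding v_structure_def really_adj_reversed by auto
  have "(u, v) \<noteq> (y, x)"
  proof
    assume uv: "(u, v) = (y, x)"
    then have "(w, y) \<in> E" using e(2,3) parents_y by auto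
    then show False using e(4) uv unfolding really_adj_def by auto
  qed
  moreover have "(w, v) \<noteq> (y, x)"
  proof
    assume wv: "(w, v) = (y, x)"
    then have "(u, y) \<in> E" using e(1,3) parents_y by auto
    then show False using e(4) wv unfolding really_adj_def by auto
  qed
  ultimately show "v_structure E u v w" using e unfolding v_structure_def by auto
next
  assume "v_structure E u v w"
  then have e: "(u, v) \<in> E" "(w, v) \<in> E" "u \<noteq> w" "\<not> really_adj E u w"
    unfolding v_structure_def by auto
  have "(u, v) \<noteq> (x, y)"
  proof
    assume uv: "(u, v) = (x, y)"
    then have "(w, x) \<in> E" using e(2,3) parents_y by auto
    then show False using e(4) uv unfolding really_adj_def by auto
  qed
  moreover have "(w, v) \<noteq> (x, y)"
  proof
    assume wv: "(w, v) = (x, y)"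
    then have "(u, x) \<in> E" using e(1,3) parents_y by auto
    then show False using e(4) wv unfolding really_adj_def by auto
  qed
  ultimately show "v_structure Erev u v w"
    using e unfolding v_structure_def really_adj_reversed by auto
qed

text \<open>A directed path through x can be rerouted through y: the predecessor of x on it is
  also a parent of y, and y \<rightarrow> x is an edge of the reversed graph.\<close>

lemma rtrancl_reversed:
  assumes "(v, d) \<in> E\<^sup>*"
  shows "(v \<noteq> x \<longrightarrow> (v, d) \<in> Erev\<^sup>*) \<and> (v = x \<longrightarrow> (y, d) \<in> Erev\<^sup>*)"
  using assms
proof (induction rule: converse_rtrancl_induct)
  case base
  have "(y, x) \<in> Erev" by simp
  then show ?case by blast
next
  case (step v w)
  have yx: "(y, x) \<in> Erev" by simp
  show ?case
  proof (intro conjI impI)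
    assume "v \<noteq> x"
    show "(v, d) \<in> Erev\<^sup>*"
    proof (cases "w = x")
      case False
      then have "(v, w) \<in> Erev" "(w, d) \<in> Erev\<^sup>*" using step \<open>v \<noteq> x\<close> by auto
      then show ?thesis by (rule converse_rtrancl_into_rtrancl)
    next
      case True
      then have "(v, y) \<in> Erev" using step(1) parents_y \<open>v \<noteq> x\<close> by auto
      moreover have "(y, d) \<in> Erev\<^sup>*" using step.IH True by blast
      ultimately show ?thesis by (rule converse_rtrancl_into_rtrancl)
    qed
  next
    assume "v = x"
    show "(y, d) \<in> Erev\<^sup>*"
    proof (cases "w = y")
      case True
      then show ?thesis using step.IH x_neq_y by blast
    next
      case False
      have "w \<noteq> x" using step(1) \<open>v = x\<close> irrefl_E by blast
      have "(x, w) \<in> Erev" using step(1) \<open>v = x\<close> False by auto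
      moreover have "(w, d) \<in> Erev\<^sup>*" using step.IH \<open>w \<noteq> x\<close> by blast
      ultimately show ?thesis using yx by (blast intro: converse_rtrancl_into_rtrancl)
    qed
  qed
qed

lemma ancestors_reversed: "v \<noteq> x \<Longrightarrow> v \<in> ancestors E S \<Longrightarrow> v \<in> ancestors Erev S"
  unfolding ancestors_def using rtrancl_reversed by blast

lemma ancestor_x_reversed: "x \<in> ancestors E S \<Longrightarrow> y \<in> ancestors Erev S"
  unfolding ancestors_def using rtrancl_reversed by blast

definition apart :: "nat \<Rightarrow> nat \<Rightarrow> bool" where
  "apart u v \<longleftrightarrow> \<not> (u = x \<and> v = y) \<and> \<not> (u = y \<and> v = x)"

lemma active_triple_reversed:
  assumes "active_triple E S a b c" "apart a b" "apart b c"
    and "b = x \<longrightarrow> \<not> head_to_head E a b c \<or> x \<in> ancestors Erev S"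
  shows "active_triple Erev S a b c"
proof -
  have "(a, b) \<in> Erev \<longleftrightarrow> (a, b) \<in> E" "(c, b) \<in> Erev \<longleftrightarrow> (c, b) \<in> E"
    using assms(2,3) unfolding apart_def by auto
  then have "head_to_head Erev a b c \<longleftrightarrow> head_to_head E a b c"
    unfolding head_to_head_def by simp
  then show ?thesis
    using assms(1,4) ancestors_reversed unfolding active_triple_def by metis
qed

lemma active_triple_reversed_off_xy:
  "active_triple E S a b c \<Longrightarrow> x \<notin> {a, b, c} \<Longrightarrow> y \<notin> {a, b, c} \<Longrightarrow> active_triple Erev S a b c"
  by (intro active_triple_reversed) (auto simp: apart_def)

lemma active_triple_reversed_off_x:
  "active_triple E S a b c \<Longrightarrow> x \<notin> {a, b, c} \<Longrightarrow> active_triple Erev S a b c"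
  by (intro active_triple_reversed) (auto simp: apart_def)

lemma active_triple_reversed_off_y:
  "active_triple E S a b c \<Longrightarrow> y \<notin> {a, b, c} \<Longrightarrow>
   (b = x \<longrightarrow> \<not> head_to_head E a b c \<or> x \<in> ancestors Erev S) \<Longrightarrow> active_triple Erev S a b c"
  by (intro active_triple_reversed) (auto simp: apart_def)

lemma active_path_reversedI:
  assumes "ys \<noteq> []" "distinct ys" "successively (really_adj E) ys"
    "\<And>a b c. (a, b, c) \<in> set (triples ys) \<Longrightarrow> active_triple Erev S a b c"
  shows "active_path Erev S ys"
  unfolding active_path_def really_adj_reversed using assms by blast

definition reroutable :: "nat set \<Rightarrow> nat list \<Rightarrow> bool" where
  "reroutable S xs \<longleftrightarrow> (\<exists>ys. active_path Erev S ys \<and> hd ys = hd xs \<and> last ys = last xs)"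

lemma reroutable_rev: "xs \<noteq> [] \<Longrightarrow> reroutable S (rev xs) \<Longrightarrow> reroutable S xs"
  unfolding reroutable_def
  by (metis active_path_rev active_pathD(1) hd_rev last_rev rev_rev_ident)

text \<open>A collider u \<rightarrow> x \<leftarrow> w becomes the collider u \<rightarrow> y \<leftarrow> w: parents of x
  are parents of y, and y inherits the descendant of x in S.\<close>

lemma reroutable_replace_collider:
  assumes d: "active_path E S (p @ u # x # w # q)" and yn: "y \<notin> set (p @ u # x # w # q)"
    and c: "head_to_head E u x w"
  shows "reroutable S (p @ u # x # w # q)"
proof -
  let ?xs = "p @ u # x # w # q" and ?ys = "p @ u # y # w # q"
  note D = active_pathD[OF d]
  have ux: "(u, x) \<in> E" "(w, x) \<in> E" using c unfolding head_to_head_def by auto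
  then have uy: "(u, y) \<in> E" "(w, y) \<in> E" using parents_y by blast+
  have dys: "distinct ?ys" using D(2) yn by auto
  have scys: "successively (really_adj E) ?ys"
    using D(3) uy by (auto simp: successively_append_iff really_adj_def)
  have TY: "set (triples ?ys) = set (triples (p @ [u])) \<union> set (triples (w # q)) \<union>
      (if p = [] then {} else {(last p, u, y)}) \<union> {(u, y, w)} \<union>
      (if q = [] then {} else {(y, w, hd q)})"
    using set_triples_append_Cons_Cons[of p u y "w # q"] set_triples_append_Cons_Cons[of "[]" y w q]
    by auto
  have TX: "set (triples ?xs) = set (triples (p @ [u])) \<union> set (triples (w # q)) \<union>
      (if p = [] then {} else {(last p, u, x)}) \<union> {(u, x, w)} \<union>
      (if q = [] then {} else {(x, w, hd q)})"
    using set_triples_append_Cons_Cons[of p u x "w # q"] set_triples_append_Cons_Cons[of "[]" x w q]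
    by auto
  have xnp: "x \<notin> set (p @ [u])" "x \<notin> set (w # q)" using D(2) by auto
  have ynp: "y \<notin> set (p @ [u])" "y \<notin> set (w # q)" using yn by auto
  have xan: "x \<in> ancestors E S" using D(4)[of u x w] TX c unfolding active_triple_def by auto
  have tr: "active_triple Erev S a b c" if t: "(a, b, c) \<in> set (triples ?ys)" for a b c
  proof -
    consider (L) "(a, b, c) \<in> set (triples (p @ [u]))" | (R) "(a, b, c) \<in> set (triples (w # q))"
      | (J1) "p \<noteq> []" "(a, b, c) = (last p, u, y)" | (J2) "(a, b, c) = (u, y, w)"
      | (J3) "q \<noteq> []" "(a, b, c) = (y, w, hd q)"
      using t TY by (auto split: if_splits)
    then show ?thesis
    proof cases
      case L
      have "active_triple E S a b c" using D(4) L TX by blast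
      moreover have "a \<in> set (p @ [u]) \<and> b \<in> set (p @ [u]) \<and> c \<in> set (p @ [u])"
        using mem_triples_in_set[OF L] .
      ultimately show ?thesis using xnp ynp by (intro active_triple_reversed_off_xy) auto
    next
      case R
      have "active_triple E S a b c" using D(4) R TX by blast
      moreover have "a \<in> set (w # q) \<and> b \<in> set (w # q) \<and> c \<in> set (w # q)"
        using mem_triples_in_set[OF R] .
      ultimately show ?thesis using xnp ynp by (intro active_triple_reversed_off_xy) auto
    next
      case J1
      have "active_triple E S (last p) u x" using D(4) TX J1(1) by auto
      then have "u \<notin> S" using active_triple_tail_not_in[OF acyclic_E] ux(1) by blast
      moreover have "\<not> head_to_head Erev (last p) u y"
        unfolding head_to_head_def using uy(1) asym_E ux(1) irrefl_E by auto
      ultimately show ?thesis using J1 active_triple_if_not_head_to_head by simp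
    next
      case J2
      have "head_to_head Erev u y w" unfolding head_to_head_def using uy ux irrefl_E by auto
      moreover have "y \<in> ancestors Erev S" using ancestor_x_reversed xan by blast
      ultimately show ?thesis using J2 unfolding active_triple_def by simp
    next
      case J3
      have "active_triple E S x w (hd q)" using D(4) TX J3(1) by auto
      then have "w \<notin> S" using active_triple_tail_not_in'[OF acyclic_E] ux(2) by blast
      moreover have "\<not> head_to_head Erev y w (hd q)"
        unfolding head_to_head_def using uy(2) asym_E ux(2) irrefl_E by auto
      ultimately show ?thesis using J3 active_triple_if_not_head_to_head by simp
    qed
  qed
  have "active_path Erev S ?ys" using active_path_reversedI[OF _ dys scys] tr by blast
  moreover have "hd ?ys = hd ?xs" by (cases p) auto
  moreover have "last ?ys = last ?xs" by (cases q) auto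
  ultimately show ?thesis unfolding reroutable_def by blast
qed


text \<open>If y occurs later on the path, jump from the parent u of x straight to y.\<close>

lemma reroutable_shortcut:
  assumes d: "active_path E S (p @ u # x # m @ y # q)" and mne: "m \<noteq> []"
    and c: "head_to_head E u x (hd m)"
  shows "reroutable S (p @ u # x # m @ y # q)"
proof -
  let ?xs = "p @ u # x # m @ y # q" and ?ys = "p @ u # y # q"
  note D = active_pathD[OF d]
  have ux: "(u, x) \<in> E" using c unfolding head_to_head_def by auto
  then have uy: "(u, y) \<in> E" using parents_y by blast
  have dys: "distinct ?ys" using D(2) by auto
  have "successively (really_adj E) (y # q)"
    using D(3) successively_append_Cons_iff[of "really_adj E" "p @ u # x # m" y q] by auto
  then have scys: "successively (really_adj E) ?ys"
    using D(3) uy by (auto simp: successively_append_iff really_adj_def)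
  have TY: "set (triples ?ys) = set (triples (p @ [u])) \<union> set (triples (y # q)) \<union>
      (if p = [] then {} else {(last p, u, y)}) \<union> (if q = [] then {} else {(u, y, hd q)})"
    using set_triples_append_Cons_Cons[of p u y q] by auto
  have TX1: "set (triples (p @ [u])) \<subseteq> set (triples ?xs)"
    using set_triples_append_left[of "p @ [u]" "x # m @ y # q"] by simp
  have TX2: "set (triples (y # q)) \<subseteq> set (triples ?xs)"
    using set_triples_append_right[of "y # q" "p @ u # x # m"] by simp
  have TX3: "p \<noteq> [] \<Longrightarrow> (last p, u, x) \<in> set (triples ?xs)"
    using set_triples_append_Cons_Cons[of p u x "m @ y # q"] by auto
  have TX4: "(u, x, hd m) \<in> set (triples ?xs)"
    using set_triples_append_Cons_Cons[of p u x "m @ y # q"] mne by (cases m) auto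
  have TX5: "q \<noteq> [] \<Longrightarrow> (last m, y, hd q) \<in> set (triples ?xs)"
  proof -
    assume qne: "q \<noteq> []"
    obtain m0 ml where m: "m = m0 @ [ml]" using mne by (cases m rule: rev_cases) auto
    have "(ml, y, hd q) \<in> set (triples ((p @ u # x # m0) @ ml # y # q))"
      unfolding set_triples_append_Cons_Cons[of "p @ u # x # m0" ml y q] using qne by simp
    then show ?thesis using m by simp
  qed
  have xnp: "x \<notin> set (p @ [u])" "x \<notin> set (y # q)" using D(2) x_neq_y by auto
  have xan: "x \<in> ancestors E S" using D(4)[OF TX4] c unfolding active_triple_def by auto
  have yan: "y \<in> ancestors Erev S" using ancestor_x_reversed xan by blast
  have tr: "active_triple Erev S a b c" if t: "(a, b, c) \<in> set (triples ?ys)" for a b c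
  proof -
    consider (L) "(a, b, c) \<in> set (triples (p @ [u]))" | (R) "(a, b, c) \<in> set (triples (y # q))"
      | (J1) "p \<noteq> []" "(a, b, c) = (last p, u, y)" | (J2) "q \<noteq> []" "(a, b, c) = (u, y, hd q)"
      using t TY by (auto split: if_splits)
    then show ?thesis
    proof cases
      case L
      have "active_triple E S a b c" using D(4) L TX1 by blast
      then show ?thesis
        using mem_triples_in_set[OF L] xnp by (intro active_triple_reversed_off_x) auto
    next
      case R
      have "active_triple E S a b c" using D(4) R TX2 by blast
      then show ?thesis
        using mem_triples_in_set[OF R] xnp by (intro active_triple_reversed_off_x) auto
    next
      case J1
      have "active_triple E S (last p) u x" using D(4) TX3 J1(1) by blast
      then have "u \<notin> S" using active_triple_tail_not_in[OF acyclic_E] ux by blast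
      moreover have "\<not> head_to_head Erev (last p) u y"
        unfolding head_to_head_def using uy asym_E ux irrefl_E by auto
      ultimately show ?thesis using J1 active_triple_if_not_head_to_head by simp
    next
      case J2
      have hq: "hd q \<in> set q" using J2(1) by simp
      have hqx: "hd q \<noteq> x" using D(2) hq by auto
      have "active_triple E S (last m) y (hd q)" using D(4) TX5 J2(1) by blast
      then have "y \<in> S \<longrightarrow> (hd q, y) \<in> E" unfolding active_triple_def head_to_head_def by blast
      then have "y \<in> S \<longrightarrow> head_to_head Erev u y (hd q)"
        unfolding head_to_head_def using uy hqx ux irrefl_E by auto
      then show ?thesis using J2 yan unfolding active_triple_def by simp
    qed
  qed
  have "active_path Erev S ?ys" using active_path_reversedI[OF _ dys scys] tr by blast
  moreover have "hd ?ys = hd ?xs" by (cases p) auto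
  moreover have "last ?ys = last ?xs" by (cases q) auto
  ultimately show ?thesis unfolding reroutable_def by blast
qed


lemma active_triple_reversed_before_edge:
  assumes "active_path E S (p @ x # y # q)" "(a, b, c) \<in> set (triples (p @ [x]))"
  shows "active_triple Erev S a b c"
proof -
  note D = active_pathD[OF assms(1)]
  have T: "set (triples (p @ x # y # q)) = set (triples (p @ [x])) \<union> set (triples (y # q)) \<union>
      (if p = [] then {} else {(last p, x, y)}) \<union> (if q = [] then {} else {(x, y, hd q)})"
    by (rule set_triples_append_Cons_Cons)
  then have t: "(a, b, c) \<in> set (triples (p @ x # y # q))" using assms(2) by blast
  have abc: "a \<in> set (p @ [x]) \<and> b \<in> set (p @ [x]) \<and> c \<in> set (p @ [x])"
    using mem_triples_in_set[OF assms(2)] .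
  have "y \<notin> set (p @ [x])" using D(2) x_neq_y by auto
  moreover have "b \<noteq> x"
  proof
    assume "b = x"
    have "p \<noteq> []" using assms(2) by (cases p) auto
    then have "(last p, x, y) \<in> set (triples (p @ x # y # q))" using T by auto
    then have "c = y" using mem_triples_middle_unique[OF D(2) t] \<open>b = x\<close> by blast
    then show False using abc \<open>y \<notin> set (p @ [x])\<close> by blast
  qed
  ultimately show ?thesis using D(4)[OF t] abc by (intro active_triple_reversed_off_y) auto
qed

lemma active_triple_reversed_after_edge:
  assumes "active_path E S (p @ x # y # q)" "(a, b, c) \<in> set (triples (y # q))"
  shows "active_triple Erev S a b c"
proof -
  note D = active_pathD[OF assms(1)]
  have "(a, b, c) \<in> set (triples (p @ x # y # q))"
    using assms(2) set_triples_append_right[of "y # q" "p @ [x]"] by auto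
  moreover have "x \<notin> set (y # q)" using D(2) x_neq_y by auto
  ultimately show ?thesis
    using D(4) mem_triples_in_set[OF assms(2)] by (intro active_triple_reversed_off_x) auto
qed

text \<open>A parent a of x before the edge is also a parent of y, so x can be skipped.\<close>

lemma reroutable_through_edge_from_parent:
  assumes d: "active_path E S (p @ a # x # y # q)" and ax: "(a, x) \<in> E"
  shows "reroutable S (p @ a # x # y # q)"
proof -
  let ?xs = "p @ a # x # y # q" and ?ys = "p @ a # y # q"
  note D = active_pathD[OF d]
  have ay: "(a, y) \<in> E" using parents_y ax by blast
  have "a \<noteq> x" "a \<noteq> y" using D(2) by auto
  have T: "set (triples ?ys) = set (triples (p @ [a])) \<union> set (triples (y # q)) \<union>
      (if p = [] then {} else {(last p, a, y)}) \<union> (if q = [] then {} else {(a, y, hd q)})"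
    by (rule set_triples_append_Cons_Cons)
  have "active_triple Erev S a' b c" if t: "(a', b, c) \<in> set (triples ?ys)" for a' b c
  proof -
    consider (L) "(a', b, c) \<in> set (triples (p @ [a]))" | (R) "(a', b, c) \<in> set (triples (y # q))"
      | (J1) "p \<noteq> []" "(a', b, c) = (last p, a, y)" | (J2) "q \<noteq> []" "(a', b, c) = (a, y, hd q)"
      using t T by (auto split: if_splits)
    then show ?thesis
    proof cases
      case L
      then have "(a', b, c) \<in> set (triples ((p @ [a]) @ [x]))"
        using set_triples_append_left by blast
      then show ?thesis using active_triple_reversed_before_edge[where p = "p @ [a]"] d by simp
    next
      case R
      then show ?thesis using active_triple_reversed_after_edge[where p = "p @ [a]"] d by simp
    next
      case J1
      have "(last p, a, x) \<in> set (triples ?xs)"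
        using set_triples_append_Cons_Cons[of p a x "y # q"] J1(1) by auto
      then have "a \<notin> S"
        using D(4) active_triple_tail_not_in[OF acyclic_E] ax by blast
      moreover have "\<not> head_to_head Erev (last p) a y"
        unfolding head_to_head_def using ay asym_E \<open>a \<noteq> x\<close> \<open>a \<noteq> y\<close> by auto
      ultimately show ?thesis using J1 active_triple_if_not_head_to_head by simp
    next
      case J2
      have "hd q \<noteq> x" using D(2) J2(1) by (cases q) auto
      then have "head_to_head Erev a y (hd q) \<longleftrightarrow> head_to_head E x y (hd q)"
        unfolding head_to_head_def using ay edge_xy \<open>a \<noteq> x\<close> \<open>a \<noteq> y\<close> by auto
      moreover have "(x, y, hd q) \<in> set (triples ?xs)"
        using set_triples_append_Cons_Cons[of "p @ [a]" x y q] J2(1) by auto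
      then have "active_triple E S x y (hd q)" using D(4) by blast
      ultimately show ?thesis
        using J2 ancestors_reversed[of y] x_neq_y unfolding active_triple_def by auto
    qed
  qed
  moreover have "distinct ?ys" using D(2) by auto
  moreover have "successively (really_adj E) ?ys"
    using D(3) ay by (auto simp: successively_append_iff really_adj_def)
  ultimately have "active_path Erev S ?ys" using active_path_reversedI by blast
  moreover have "hd ?ys = hd ?xs" by (cases p) auto
  moreover have "last ?ys = last ?xs" by (cases q) auto
  ultimately show ?thesis unfolding reroutable_def by blast
qed

text \<open>Otherwise, a parent b of y after the edge is also a parent of x, so y can be skipped.\<close>

lemma reroutable_through_edge_to_parent:
  assumes d: "active_path E S (p @ x # y # b # q)" and "(b, y) \<in> E"
    and no_parent: "p \<noteq> [] \<Longrightarrow> (last p, x) \<notin> E"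
  shows "reroutable S (p @ x # y # b # q)"
proof -
  let ?xs = "p @ x # y # b # q" and ?ys = "p @ x # b # q"
  note D = active_pathD[OF d]
  have "b \<noteq> x" "b \<noteq> y" using D(2) by auto
  then have bx: "(b, x) \<in> E" using parents_y \<open>(b, y) \<in> E\<close> by blast
  have xp: "(x, last p) \<in> E" "last p \<noteq> y" if "p \<noteq> []"
  proof -
    have "last p \<in> set p" using that by simp
    then show "last p \<noteq> y" using D(2) by auto
    show "(x, last p) \<in> E"
      using D(3) no_parent[OF that] that by (auto simp: successively_append_iff really_adj_def)
  qed
  have T: "set (triples ?ys) = set (triples (p @ [x])) \<union> set (triples (b # q)) \<union>
      (if p = [] then {} else {(last p, x, b)}) \<union> (if q = [] then {} else {(x, b, hd q)})"
    by (rule set_triples_append_Cons_Cons)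
  have "active_triple Erev S a' b' c" if t: "(a', b', c) \<in> set (triples ?ys)" for a' b' c
  proof -
    consider (L) "(a', b', c) \<in> set (triples (p @ [x]))" | (R) "(a', b', c) \<in> set (triples (b # q))"
      | (J1) "p \<noteq> []" "(a', b', c) = (last p, x, b)" | (J2) "q \<noteq> []" "(a', b', c) = (x, b, hd q)"
      using t T by (auto split: if_splits)
    then show ?thesis
    proof cases
      case L
      then show ?thesis using active_triple_reversed_before_edge d by blast
    next
      case R
      then have "(a', b', c) \<in> set (triples ([y] @ b # q))" using set_triples_append_right by blast
      then show ?thesis using active_triple_reversed_after_edge d by simp
    next
      case J1
      have "(last p, x, y) \<in> set (triples ?xs)"
        using set_triples_append_Cons_Cons[of p x y "b # q"] J1(1) by auto
      then have "x \<notin> S" using D(4) active_triple_tail_not_in[OF acyclic_E] edge_xy by blast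
      moreover have "\<not> head_to_head Erev (last p) x b"
        unfolding head_to_head_def using xp[OF J1(1)] asym_E by auto
      ultimately show ?thesis using J1 active_triple_if_not_head_to_head by simp
    next
      case J2
      have "(y, b, hd q) \<in> set (triples ?xs)"
        using set_triples_append_Cons_Cons[of "p @ [x]" y b q] J2(1) by auto
      then have "b \<notin> S"
        using D(4) active_triple_tail_not_in'[OF acyclic_E] \<open>(b, y) \<in> E\<close> by blast
      moreover have "\<not> head_to_head Erev x b (hd q)"
        unfolding head_to_head_def using bx asym_E x_neq_y by auto
      ultimately show ?thesis using J2 active_triple_if_not_head_to_head by simp
    qed
  qed
  moreover have "distinct ?ys" using D(2) by auto
  moreover have "successively (really_adj E) ?ys"
    using D(3) bx by (auto simp: successively_append_iff really_adj_def)
  ultimately have "active_path Erev S ?ys" using active_path_reversedI by blast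
  moreover have "hd ?ys = hd ?xs" by (cases p) auto
  ultimately show ?thesis unfolding reroutable_def by auto
qed

lemma active_path_reversed_through_edge:
  assumes d: "active_path E S (p @ x # y # q)"
    and "p \<noteq> [] \<Longrightarrow> (last p, x) \<notin> E" and "q \<noteq> [] \<Longrightarrow> (hd q, y) \<notin> E"
  shows "active_path Erev S (p @ x # y # q)"
proof -
  let ?xs = "p @ x # y # q"
  note D = active_pathD[OF d]
  have T: "set (triples ?xs) = set (triples (p @ [x])) \<union> set (triples (y # q)) \<union>
      (if p = [] then {} else {(last p, x, y)}) \<union> (if q = [] then {} else {(x, y, hd q)})"
    by (rule set_triples_append_Cons_Cons)
  have "active_triple Erev S a' b' c" if t: "(a', b', c) \<in> set (triples ?xs)" for a' b' c
  proof -
    consider (L) "(a', b', c) \<in> set (triples (p @ [x]))" | (R) "(a', b', c) \<in> set (triples (y # q))"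
      | (J1) "p \<noteq> []" "(a', b', c) = (last p, x, y)" | (J2) "q \<noteq> []" "(a', b', c) = (x, y, hd q)"
      using t T by (auto split: if_splits)
    then show ?thesis
    proof cases
      case L
      then show ?thesis using active_triple_reversed_before_edge d by blast
    next
      case R
      then show ?thesis using active_triple_reversed_after_edge d by blast
    next
      case J1
      have "last p \<noteq> y" using D(2) last_in_set[OF J1(1)] by auto
      have "active_triple E S (last p) x y" using D(4) t J1 by simp
      then have "x \<notin> S" using active_triple_tail_not_in[OF acyclic_E _ edge_xy] by blast
      moreover have "\<not> head_to_head Erev (last p) x y"
        unfolding head_to_head_def using assms(2) J1(1) \<open>last p \<noteq> y\<close> by auto
      ultimately show ?thesis using J1 active_triple_if_not_head_to_head by simp
    next
      case J2
      have "\<not> head_to_head E x y (hd q)" using assms(3) J2(1) unfolding head_to_head_def by auto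
      then have "y \<notin> S" using D(4) t J2 unfolding active_triple_def by auto
      moreover have "\<not> head_to_head Erev x y (hd q)"
        unfolding head_to_head_def using x_neq_y by auto
      ultimately show ?thesis using J2 active_triple_if_not_head_to_head by simp
    qed
  qed
  then show ?thesis using active_path_reversedI[OF D(1-3)] by blast
qed

lemma reroutable_through_edge:
  assumes "active_path E S (p @ x # y # q)"
  shows "reroutable S (p @ x # y # q)"
proof -
  consider (from_parent) p' a where "p = p' @ [a]" "(a, x) \<in> E"
    | (to_parent) b q' where "p \<noteq> [] \<Longrightarrow> (last p, x) \<notin> E" "q = b # q'" "(b, y) \<in> E"
    | (none) "p \<noteq> [] \<Longrightarrow> (last p, x) \<notin> E" "q \<noteq> [] \<Longrightarrow> (hd q, y) \<notin> E"
    by (metis list.collapse rev_exhaust last_snoc)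
  then show ?thesis
  proof cases
    case from_parent
    then show ?thesis using reroutable_through_edge_from_parent assms by simp
  next
    case to_parent
    then show ?thesis using reroutable_through_edge_to_parent assms by simp
  next
    case none
    then show ?thesis
      using active_path_reversed_through_edge[OF assms] unfolding reroutable_def by blast
  qed
qed

lemma active_path_reversed_if_no_blocked_collider:
  assumes "active_path E S xs" and "successively apart xs"
    and "\<forall>a c. (a, x, c) \<in> set (triples xs) \<longrightarrow> \<not> head_to_head E a x c \<or> x \<in> ancestors Erev S"
  shows "active_path Erev S xs"
proof -
  note D = active_pathD[OF assms(1)]
  have "active_triple Erev S a b c" if "(a, b, c) \<in> set (triples xs)" for a b c
    using active_triple_reversed[OF D(4)[OF that]] mem_triples_successively[OF assms(2) that]
      assms(3) that by blast
  then show ?thesis using active_path_reversedI[OF D(1-3)] by blast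
qed

text \<open>An active path is rerouted in the reversed graph according to how it meets x and y:
  through the edge itself, through a collider at x (replaced by y, or shortcut through y when
  y lies further along the path), or not at all.\<close>

lemma reroutable_active_path:
  assumes d: "active_path E S xs"
  shows "reroutable S xs"
proof -
  have "xs \<noteq> []" using active_pathD(1)[OF d] .
  consider (xy) p q where "xs = p @ x # y # q" | (yx) p q where "xs = p @ y # x # q"
    | (apart) "successively apart xs"
    using not_successively_split[of apart xs] unfolding apart_def by blast
  then show ?thesis
  proof cases
    case xy
    then show ?thesis using reroutable_through_edge d by blast
  next
    case yx
    then have "rev xs = rev q @ x # y # rev p" by simp
    then show ?thesis
      using reroutable_through_edge d active_path_rev reroutable_rev \<open>xs \<noteq> []\<close> by metis
  next
    case apart
    show ?thesis
    proof (cases "\<forall>a c. (a, x, c) \<in> set (triples xs) \<longrightarrow>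
        \<not> head_to_head E a x c \<or> x \<in> ancestors Erev S")
      case True
      then show ?thesis
        using active_path_reversed_if_no_blocked_collider[OF d apart]
        unfolding reroutable_def by blast
    next
      case False
      then obtain a c where t: "(a, x, c) \<in> set (triples xs)" "head_to_head E a x c" by blast
      obtain p q where xs: "xs = p @ a # x # c # q"
        using t(1) unfolding mem_triples_iff_split by blast
      have "a \<noteq> y" "c \<noteq> y" using mem_triples_successively[OF apart t(1)] unfolding apart_def by auto
      consider "y \<notin> set xs" | "y \<in> set q" | "y \<in> set p" using xs \<open>a \<noteq> y\<close> \<open>c \<noteq> y\<close> x_neq_y by auto
      then show ?thesis
      proof cases
        case 1
        then show ?thesis using reroutable_replace_collider d t(2) xs by blast
      next
        case 2
        then obtain q1 q2 where "xs = p @ a # x # (c # q1) @ y # q2"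
          using xs by (metis split_list append_Cons)
        then show ?thesis
          using reroutable_shortcut[where p = p and u = a and m = "c # q1" and q = q2] d t(2)
          by simp
      next
        case 3
        then obtain p1 p2 where "rev xs = rev q @ c # x # (a # rev p2) @ y # rev p1"
          using xs by (metis split_list rev.simps(2) rev_append append.assoc append_Cons append_Nil)
        moreover have "head_to_head E c x (hd (a # rev p2))"
          using t(2) unfolding head_to_head_def by simp
        ultimately have "reroutable S (rev xs)"
          using reroutable_shortcut[where p = "rev q" and u = c and m = "a # rev p2" and q = "rev p1"]
            d active_path_rev
          by (metis list.distinct(1))
        then show ?thesis using reroutable_rev \<open>xs \<noteq> []\<close> by blast
      qed
    qed
  qed
qed

lemma d_connected_reversed: "d_connected E j k S \<Longrightarrow> d_connected Erev j k S"
  using reroutable_active_path acyclic_E acyclic_reversed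
  unfolding d_connected_iff_active_path[OF acyclic_E]
    d_connected_iff_active_path[OF acyclic_reversed] reroutable_def
  by metis

end

lemma acyclic_not_virtually_adj:
  assumes "acyclic E" shows "\<not> virtually_adj E a b"
proof
  assume "virtually_adj E a b"
  then obtain l where "(a, l) \<in> E" "(b, l) \<in> E" "(l, a) \<in> E\<^sup>* \<or> (l, b) \<in> E\<^sup>*"
    unfolding virtually_adj_def by blast
  then show False using acyclic_edge_not_back[OF assms] by blast
qed

lemma really_adj_if_same_skeleton:
  assumes "digraph p E1" "acyclic E2" "skeleton p E1 = skeleton p E2" "really_adj E1 a b"
  shows "really_adj E2 a b"
proof -
  have "a \<in> {1..p}" "b \<in> {1..p}" "a \<noteq> b"
    using assms(4) digraph_edgeD[OF assms(1)] unfolding really_adj_def by blast+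
  then have "{a, b} \<in> skeleton p E2" using assms(3,4) unfolding skeleton_def by blast
  then obtain a' b' where "{a, b} = {a', b'}" "really_adj E2 a' b'"
    unfolding skeleton_def using acyclic_not_virtually_adj[OF assms(2)] by blast
  then show ?thesis unfolding doubleton_eq_iff using really_adj_sym by metis
qed

lemma d_connected_through:
  assumes "acyclic E" "distinct [a, b, c]" "really_adj E a b" "really_adj E b c"
    "active_triple E S a b c"
  shows "d_connected E a c S"
proof -
  have "active_path E S [a, b, c]" unfolding active_path_def using assms(2-5) by simp
  then show ?thesis using active_path_imp_d_connected[OF assms(1)] by fastforce
qed

lemma not_d_connected_if_Dsep_subset:
  assumes "digraph p E1" "acyclic E1" "Dsep p E1 \<subseteq> Dsep p E2"
    and "a \<in> {1..p}" "c \<in> {1..p}" "a \<noteq> c" "\<not> really_adj E1 a c"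
  shows "\<not> d_connected E2 a c (ancestor_sepset p E1 a c)"
proof -
  let ?S = "ancestor_sepset p E1 a c"
  have "\<not> d_connected E1 a c ?S"
    using nonadjacent_d_separated_by_ancestors[OF assms(1,6,7)]
      acyclic_not_virtually_adj[OF assms(2)] by blast
  moreover have "?S \<subseteq> {1..p} - {a, c}" unfolding ancestor_sepset_def by auto
  ultimately have "(a, c, ?S) \<in> Dsep p E1" using assms(4-6) unfolding Dsep_def by blast
  then show ?thesis using assms(3) unfolding Dsep_def by blast
qed

lemma v_structure_if_Dsep_subset:
  assumes dg1: "digraph p E1" and a1: "acyclic E1" and a2: "acyclic E2"
    and adj: "\<And>u v. really_adj E1 u v \<longleftrightarrow> really_adj E2 u v"
    and Dsep: "Dsep p E1 \<subseteq> Dsep p E2" and v: "v_structure E1 a b c"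
  shows "v_structure E2 a b c"
proof (rule ccontr)
  assume "\<not> v_structure E2 a b c"
  have e: "(a, b) \<in> E1" "(c, b) \<in> E1" "a \<noteq> c" "\<not> really_adj E1 a c"
    using v unfolding v_structure_def by auto
  have V: "a \<in> {1..p}" "c \<in> {1..p}" "a \<noteq> b" "c \<noteq> b"
    using digraph_edgeD[OF dg1 e(1)] digraph_edgeD[OF dg1 e(2)] by auto
  let ?S = "ancestor_sepset p E1 a c"
  have "b \<notin> ?S"
    using acyclic_edge_not_back[OF a1 e(1)] acyclic_edge_not_back[OF a1 e(2)]
    unfolding ancestor_sepset_def by blast
  have r2: "really_adj E2 a b" "really_adj E2 b c" "\<not> really_adj E2 a c"
    using adj e unfolding really_adj_def by blast+
  then have "\<not> head_to_head E2 a b c"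
    using \<open>\<not> v_structure E2 a b c\<close> e(3) unfolding v_structure_def head_to_head_def by blast
  then have "active_triple E2 ?S a b c" using \<open>b \<notin> ?S\<close> unfolding active_triple_def by blast
  then have "d_connected E2 a c ?S"
    using d_connected_through[OF a2 _ r2(1,2)] V e(3) by simp
  then show False using not_d_connected_if_Dsep_subset[OF dg1 a1 Dsep V(1,2) e(3,4)] by blast
qed

lemma v_structure_if_Dsep_subset':
  assumes dg1: "digraph p E1" and dg2: "digraph p E2" and a1: "acyclic E1" and a2: "acyclic E2"
    and adj: "\<And>u v. really_adj E1 u v \<longleftrightarrow> really_adj E2 u v"
    and Dsep: "Dsep p E1 \<subseteq> Dsep p E2" and v: "v_structure E2 a b c"
  shows "v_structure E1 a b c"
proof (rule ccontr)
  assume nv: "\<not> v_structure E1 a b c"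
  have e: "(a, b) \<in> E2" "(c, b) \<in> E2" "a \<noteq> c" "\<not> really_adj E2 a c"
    using v unfolding v_structure_def by auto
  have V: "a \<in> {1..p}" "b \<in> {1..p}" "c \<in> {1..p}" "a \<noteq> b" "c \<noteq> b"
    using digraph_edgeD[OF dg2 e(1)] digraph_edgeD[OF dg2 e(2)] by auto
  have "\<not> really_adj E1 a c" "really_adj E1 a b" "really_adj E1 c b"
    using adj e unfolding really_adj_def by blast+
  then have "(b, a) \<in> E1 \<or> (b, c) \<in> E1"
    using nv e(3) unfolding v_structure_def really_adj_def by blast
  let ?S = "ancestor_sepset p E1 a c"
  have "b \<in> ?S" unfolding ancestor_sepset_def using V \<open>(b, a) \<in> E1 \<or> (b, c) \<in> E1\<close> by auto
  then have "active_triple E2 ?S a b c"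
    unfolding active_triple_def head_to_head_def ancestors_def using e by blast
  moreover have "really_adj E2 a b" "really_adj E2 b c" using e unfolding really_adj_def by auto
  moreover have "distinct [a, b, c]" using V e(3) by auto
  ultimately have "d_connected E2 a c ?S" using d_connected_through[OF a2] by blast
  then show False
    using not_d_connected_if_Dsep_subset[OF dg1 a1 Dsep V(1,3) e(3) \<open>\<not> really_adj E1 a c\<close>] by blast
qed

locale same_pattern =
  fixes E1 E2 :: "(nat \<times> nat) set"
  assumes acyclic1: "acyclic E1" and acyclic2: "acyclic E2"
    and same_adj: "\<And>u v. really_adj E1 u v \<longleftrightarrow> really_adj E2 u v"
    and same_v_structure: "\<And>a b c. v_structure E1 a b c \<longleftrightarrow> v_structure E2 a b c"
begin

lemma reversed_in_E2: "(a, b) \<in> E1 - E2 \<Longrightarrow> (b, a) \<in> E2"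
  using same_adj[of a b] unfolding really_adj_def by blast

text \<open>The edge z \<rightarrow> x is not in E1 - E2 by the choice of y, so z \<rightarrow> x \<leftarrow> y is a
  v-structure of E2 unless z and y are adjacent; it is none of E1, so z \<rightarrow> y.\<close>

lemma parent_of_tail_is_parent_of_head:
  assumes xy: "(x, y) \<in> E1 - E2"
    and ymin: "\<And>y'. (y', y) \<in> E1\<^sup>+ \<Longrightarrow> y' \<notin> snd ` (E1 - E2)"
    and zx: "(z, x) \<in> E1"
  shows "(z, y) \<in> E1"
proof -
  have "(z, x) \<notin> E1 - E2"
  proof
    assume "(z, x) \<in> E1 - E2"
    then have "x \<in> snd ` (E1 - E2)" by force
    moreover have "(x, y) \<in> E1\<^sup>+" using xy by blast
    ultimately show False using ymin by blast
  qed
  then have "(z, x) \<in> E2" using zx by blast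
  have "(y, x) \<in> E2" using reversed_in_E2 xy by blast
  have "z \<noteq> y" using acyclic_edge_asym[OF acyclic1] xy zx by blast
  have "really_adj E1 z y"
  proof (rule ccontr)
    assume "\<not> really_adj E1 z y"
    then have "v_structure E2 z x y"
      using same_adj[of z y] \<open>(z, x) \<in> E2\<close> \<open>(y, x) \<in> E2\<close> \<open>z \<noteq> y\<close> unfolding v_structure_def by blast
    then have "(y, x) \<in> E1" using same_v_structure[of z x y] unfolding v_structure_def by blast
    then show False using acyclic_edge_asym[OF acyclic1] xy by blast
  qed
  then show ?thesis using acyclic_no_triangle[OF acyclic1] xy zx unfolding really_adj_def by blast
qed

text \<open>A parent z \<noteq> x of y is adjacent to x, as otherwise x \<rightarrow> y \<leftarrow> z would be a
  v-structure of E1 only; and x \<rightarrow> z is excluded by the choice of y (if z \<rightarrow> y is in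
  E2) or of x (if it is not).\<close>

lemma parent_of_head_is_parent_of_tail:
  assumes xy: "(x, y) \<in> E1 - E2"
    and ymin: "\<And>y'. (y', y) \<in> E1\<^sup>+ \<Longrightarrow> y' \<notin> snd ` (E1 - E2)"
    and xmax: "\<And>z. (x, z) \<in> E1\<^sup>+ \<Longrightarrow> (z, y) \<notin> E1 - E2"
    and zy: "(z, y) \<in> E1" and "z \<noteq> x"
  shows "(z, x) \<in> E1"
proof -
  have "really_adj E1 z x"
  proof (rule ccontr)
    assume "\<not> really_adj E1 z x"
    then have "v_structure E1 x y z"
      using xy zy \<open>z \<noteq> x\<close> really_adj_sym[of E1 x z] unfolding v_structure_def by blast
    then show False using same_v_structure[of x y z] xy unfolding v_structure_def by blast
  qed
  moreover have "(x, z) \<notin> E1"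
  proof
    assume xz: "(x, z) \<in> E1"
    show False
    proof (cases "(z, y) \<in> E2")
      case False
      then show False using xmax[of z] xz zy by blast
    next
      case True
      have "(x, z) \<notin> E2"
        using acyclic_no_triangle[OF acyclic2 _ True] reversed_in_E2[OF xy] by blast
      then have "z \<in> snd ` (E1 - E2)" using xz by force
      moreover have "(z, y) \<in> E1\<^sup>+" using zy by blast
      ultimately show False using ymin by blast
    qed
  qed
  ultimately show ?thesis unfolding really_adj_def by blast
qed

text \<open>Choose the head y of an edge of E1 - E2 minimal in the ancestral order of E1 and then its
  tail x maximal: the edge x \<rightarrow> y is covered in E1.\<close>

lemma exists_covered_edge:
  assumes "finite E1" "E1 - E2 \<noteq> {}"
  shows "\<exists>x y. (x, y) \<in> E1 - E2 \<and> (\<forall>z. (z, y) \<in> E1 \<longleftrightarrow> z = x \<or> (z, x) \<in> E1)"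
proof -
  let ?R = "E1 - E2"
  have wf1: "wf (E1\<^sup>+)" using wf_trancl[OF finite_acyclic_wf[OF assms(1) acyclic1]] .
  have wf2: "wf ((E1\<inverse>)\<^sup>+)" using wf_trancl[OF finite_acyclic_wf_converse[OF assms(1) acyclic1]] .
  have heads: "snd ` ?R \<noteq> {}" using assms(2) by blast
  obtain y where "y \<in> snd ` ?R" and ymin: "\<And>y'. (y', y) \<in> E1\<^sup>+ \<Longrightarrow> y' \<notin> snd ` ?R"
    using wfE_min'[OF wf1 heads] by blast
  then have tails: "{x. (x, y) \<in> ?R} \<noteq> {}" by force
  obtain x where xy: "(x, y) \<in> ?R"
    and xmax0: "\<And>x'. (x', x) \<in> (E1\<inverse>)\<^sup>+ \<Longrightarrow> x' \<notin> {x. (x, y) \<in> ?R}"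
    using wfE_min'[OF wf2 tails] by blast
  have xmax: "(z, y) \<notin> ?R" if "(x, z) \<in> E1\<^sup>+" for z
    using xmax0[of z] that by (simp add: trancl_converse)
  have "(z, y) \<in> E1 \<longleftrightarrow> z = x \<or> (z, x) \<in> E1" for z
  proof
    assume "(z, y) \<in> E1"
    then show "z = x \<or> (z, x) \<in> E1"
      using parent_of_head_is_parent_of_tail[OF xy ymin xmax] by blast
  next
    assume "z = x \<or> (z, x) \<in> E1"
    then show "(z, y) \<in> E1"
      using parent_of_tail_is_parent_of_head[OF xy ymin] xy by blast
  qed
  then show ?thesis using xy by blast
qed

end

text \<open>Induction on the number of edges in which the two graphs differ: reversing a covered
  edge of E1 - E2 keeps the pattern and preserves d-connection.\<close>

lemma d_connected_if_same_pattern: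
  assumes "finite E1" "same_pattern E1 E2" "d_connected E1 j k S"
  shows "d_connected E2 j k S"
  using assms
proof (induction "card (E1 - E2)" arbitrary: E1 rule: less_induct)
  case less
  interpret same_pattern E1 E2 by (rule less.prems(2))
  show ?case
  proof (cases "E1 - E2 = {}")
    case True
    then show ?thesis using d_connected_mono less.prems(3) by blast
  next
    case False
    then obtain x y where xy: "(x, y) \<in> E1 - E2"
      and parents: "\<And>z. (z, y) \<in> E1 \<longleftrightarrow> z = x \<or> (z, x) \<in> E1"
      using exists_covered_edge[OF less.prems(1)] by blast
    interpret covered_edge E1 x y
    proof
      show "acyclic E1" "(x, y) \<in> E1" using acyclic1 xy by simp_all
    qed (rule parents)
    have "same_pattern Erev E2"
    proof
      show "acyclic Erev" "acyclic E2" by (fact acyclic_reversed, fact acyclic2)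
      show "really_adj Erev u v \<longleftrightarrow> really_adj E2 u v" for u v
        using same_adj by (simp add: really_adj_reversed)
      show "v_structure Erev a b c \<longleftrightarrow> v_structure E2 a b c" for a b c
        using same_v_structure by (simp add: v_structure_reversed)
    qed
    moreover have "Erev - E2 = (E1 - E2) - {(x, y)}" using reversed_in_E2[OF xy] by blast
    then have "card (Erev - E2) < card (E1 - E2)"
      using card_Diff1_less[of "E1 - E2" "(x, y)"] less.prems(1) xy by simp
    moreover note d_connected_reversed[OF less.prems(3)]
    ultimately show ?thesis using less.hyps less.prems(1) by simp
  qed
qed

theorem Dsep_eq_if_acyclic_same_skeleton:
  assumes dg1: "digraph p E1" and dg2: "digraph p E2" and "acyclic E1" "acyclic E2"
    and skeleton: "skeleton p E1 = skeleton p E2" and Dsep: "Dsep p E1 \<subseteq> Dsep p E2"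
  shows "Dsep p E1 = Dsep p E2"
proof -
  have adj: "really_adj E1 u v \<longleftrightarrow> really_adj E2 u v" for u v
    using really_adj_if_same_skeleton[OF dg1 \<open>acyclic E2\<close> skeleton]
      really_adj_if_same_skeleton[OF dg2 \<open>acyclic E1\<close> skeleton[symmetric]] by blast
  have "same_pattern E1 E2"
  proof
    show "v_structure E1 a b c \<longleftrightarrow> v_structure E2 a b c" for a b c
      using v_structure_if_Dsep_subset[OF dg1 assms(3,4) adj Dsep]
        v_structure_if_Dsep_subset'[OF dg1 dg2 assms(3,4) adj Dsep] by blast
  qed (use assms(3,4) adj in simp_all)
  have "E1 \<subseteq> {1..p} \<times> {1..p}" using dg1 unfolding digraph_def by blast
  then have "finite E1" by (rule finite_subset) simp
  then have "d_connected E1 j k S \<Longrightarrow> d_connected E2 j k S" for j k S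
    using d_connected_if_same_pattern \<open>same_pattern E1 E2\<close> by blast
  then have "Dsep p E2 \<subseteq> Dsep p E1" unfolding Dsep_def by auto
  then show ?thesis using Dsep by blast
qed

theorem lemma2:
  shows "(\<forall>p E1 E2. digraph p E1 \<and> digraph p E2 \<and> Dsep p E1 \<subseteq> Dsep p E2
            \<longrightarrow> skeleton p E2 \<subseteq> skeleton p E1)
       \<and> (\<exists>p E1 E2. digraph p E1 \<and> digraph p E2 \<and> (\<not> acyclic E1 \<or> \<not> acyclic E2) \<and>
            skeleton p E1 = skeleton p E2 \<and> Dsep p E1 \<noteq> Dsep p E2 \<and> Dsep p E1 \<subset> Dsep p E2)
       \<and> (\<forall>p E1 E2. digraph p E1 \<and> digraph p E2 \<and> acyclic E1 \<and> acyclic E2 \<and>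
            skeleton p E1 = skeleton p E2 \<longrightarrow>
            \<not> (Dsep p E1 \<noteq> Dsep p E2 \<and> Dsep p E1 \<subset> Dsep p E2))"
proof (intro conjI allI impI)
  show "skeleton p E2 \<subseteq> skeleton p E1"
    if "digraph p E1 \<and> digraph p E2 \<and> Dsep p E1 \<subseteq> Dsep p E2" for p E1 E2
    using skeleton_subset_if_Dsep_subset that by blast
  show "\<exists>p E1 E2. digraph p E1 \<and> digraph p E2 \<and> (\<not> acyclic E1 \<or> \<not> acyclic E2) \<and>
      skeleton p E1 = skeleton p E2 \<and> Dsep p E1 \<noteq> Dsep p E2 \<and> Dsep p E1 \<subset> Dsep p E2"
    using Dsep_psubset_with_equal_skeleton by blast
  show "\<not> (Dsep p E1 \<noteq> Dsep p E2 \<and> Dsep p E1 \<subset> Dsep p E2)"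
    if "digraph p E1 \<and> digraph p E2 \<and> acyclic E1 \<and> acyclic E2 \<and> skeleton p E1 = skeleton p E2"
    for p E1 E2
    using Dsep_eq_if_acyclic_same_skeleton that by blast
qed

end
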